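(* For all integers $h \ge 2$ and $k \ge 3$, $hk \in \mathcal{R}_{\mathbf{Z}}(h,k)$.
   Context: For a positive integer $h$ and a finite set $A$ of integers, $hA$ denotes the set of all sums $a_1+\cdots+a_h$ with $a_1,\ldots,a_h \in A$ (not necessarily distinct). The sumset size set is $\mathcal{R}_{\mathbf{Z}}(h,k) = \{ |hA| : A \subseteq \mathbf{Z},\ |A| = k\}$. *)

theory Defs
  imports Main
begin

definition hsumset :: "nat \<Rightarrow> int set \<Rightarrow> int set" where
  "hsumset h A = {(\<Sum>i<h. a i) | a. \<forall>i<h. a i \<in> A}"

definition sumset_sizes :: "nat \<Rightarrow> nat \<Rightarrow> nat set" where
  "sumset_sizes h k = {card (hsumset h A) | A. finite A \<and> card A = k}"

end

theory Submission
  imports Defs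
begin

text \<open>Take \<open>A = {0..k} - {k - 1}\<close>. Adding a further copy of \<open>A\<close> to \<open>{0..m} - {m - 1}\<close>
  with \<open>m = 0\<close> or \<open>m \<ge> 3\<close> gives exactly \<open>{0..m + k} - {m + k - 1}\<close>: the sum \<open>m + k - 1\<close>
  would need one summand to be the missing point of its set, and every other value is reached
  by \<open>s + 0\<close>, \<open>(m - 2) + 1\<close> or \<open>m + (s - m)\<close>. By induction \<open>hA = {0..hk} - {hk - 1}\<close>,
  which has exactly \<open>hk\<close> elements.\<close>

definition gap_interval :: "int \<Rightarrow> int set" where
  "gap_interval n = {0..n} - {n - 1}"

lemma card_gap_interval:
  assumes "n \<ge> 1"
  shows "card (gap_interval n) = nat n"
proof -
  have "n - 1 \<in> {0..n}" using assms by simp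
  then show ?thesis
    unfolding gap_interval_def using assms by (simp add: card_Diff_singleton)
qed

lemma hsumset_0: "hsumset 0 A = {0}"
  unfolding hsumset_def by auto

lemma hsumset_Suc:
  "hsumset (Suc h) A = {x + y | x y. x \<in> hsumset h A \<and> y \<in> A}"
proof
  show "hsumset (Suc h) A \<subseteq> {x + y | x y. x \<in> hsumset h A \<and> y \<in> A}"
  proof
    fix s assume "s \<in> hsumset (Suc h) A"
    then obtain a where s: "s = (\<Sum>i<Suc h. a i)" and a: "\<forall>i<Suc h. a i \<in> A"
      unfolding hsumset_def by blast
    have "(\<Sum>i<h. a i) \<in> hsumset h A" unfolding hsumset_def using a by auto
    moreover have "s = (\<Sum>i<h. a i) + a h" using s by simp
    ultimately show "s \<in> {x + y | x y. x \<in> hsumset h A \<and> y \<in> A}" using a by blast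
  qed
next
  show "{x + y | x y. x \<in> hsumset h A \<and> y \<in> A} \<subseteq> hsumset (Suc h) A"
  proof
    fix s assume "s \<in> {x + y | x y. x \<in> hsumset h A \<and> y \<in> A}"
    then obtain a y where s: "s = (\<Sum>i<h. a i) + y" and a: "\<forall>i<h. a i \<in> A" and y: "y \<in> A"
      unfolding hsumset_def by blast
    define b where "b = a(h := y)"
    have "(\<Sum>i<h. b i) = (\<Sum>i<h. a i)" unfolding b_def by (rule sum.cong) auto
    then have "s = (\<Sum>i<Suc h. b i)" using s by (simp add: b_def)
    moreover have "\<forall>i<Suc h. b i \<in> A" using a y by (auto simp: b_def less_Suc_eq)
    ultimately show "s \<in> hsumset (Suc h) A" unfolding hsumset_def by blast
  qed
qed

lemma sumset_gap_interval:
  assumes m: "m = 0 \<or> m \<ge> 3" and k: "k \<ge> 3"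
  shows "{x + y | x y. x \<in> gap_interval m \<and> y \<in> gap_interval k} = gap_interval (m + k)"
proof
  show "{x + y | x y. x \<in> gap_interval m \<and> y \<in> gap_interval k} \<subseteq> gap_interval (m + k)"
    unfolding gap_interval_def by auto
next
  show "gap_interval (m + k) \<subseteq> {x + y | x y. x \<in> gap_interval m \<and> y \<in> gap_interval k}"
  proof
    fix s assume s: "s \<in> gap_interval (m + k)"
    have "0 \<in> gap_interval k" "1 \<in> gap_interval k" using k by (auto simp: gap_interval_def)
    consider "s \<le> m" "s \<noteq> m - 1" | "s = m - 1" "m \<ge> 3" | "s > m"
      using s m unfolding gap_interval_def by (auto; linarith)
    then show "s \<in> {x + y | x y. x \<in> gap_interval m \<and> y \<in> gap_interval k}"
    proof cases
      case 1
      then have "s = s + 0" "s \<in> gap_interval m" using s by (auto simp: gap_interval_def)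
      with \<open>0 \<in> gap_interval k\<close> show ?thesis by blast
    next
      case 2
      then have "s = (m - 2) + 1" "m - 2 \<in> gap_interval m" by (auto simp: gap_interval_def)
      with \<open>1 \<in> gap_interval k\<close> show ?thesis by blast
    next
      case 3
      then have "s = m + (s - m)" "m \<in> gap_interval m" "s - m \<in> gap_interval k"
        using s m by (auto simp: gap_interval_def)
      then show ?thesis by blast
    qed
  qed
qed

lemma hsumset_gap_interval:
  assumes "k \<ge> 3"
  shows "hsumset h (gap_interval k) = gap_interval (int h * k)"
proof (induction h)
  case 0
  then show ?case by (simp add: hsumset_0 gap_interval_def)
next
  case (Suc h)
  have "int h * k = 0 \<or> int h * k \<ge> 3"
    using assms by (cases h) (auto intro: order_trans[OF _ mult_right_mono[of 1]])
  then show ?case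
    using sumset_gap_interval[OF _ assms] by (simp add: hsumset_Suc Suc.IH algebra_simps)
qed

theorem mainTheorem9:
  fixes h k :: nat
  assumes "h \<ge> 2" and "k \<ge> 3"
  shows "h * k \<in> sumset_sizes h k"
proof -
  let ?A = "gap_interval (int k)"
  have "int h * int k \<ge> 1" using assms by (simp add: Suc_le_eq flip: of_nat_mult)
  then have "card (hsumset h ?A) = h * k"
    using assms(2) by (simp add: hsumset_gap_interval card_gap_interval nat_mult_distrib)
  moreover have "card ?A = k" using assms(2) by (simp add: card_gap_interval)
  moreover have "finite ?A" by (simp add: gap_interval_def)
  ultimately show ?thesis unfolding sumset_sizes_def by force
qed

end
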